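(* There is an injective ring homomorphism $\iota:\Lambda_0\to\mathcal C(\mathbb Z_p,A_{\mathfrak p})$ induced by $[u]\mapsto(s\mapsto u^s)$ for $u\in1+\mathfrak pA_{\mathfrak p}$ and extended $A_{\mathfrak p}$-linearly. Moreover, for every dense subset $I\subset\mathbb Z_p$, the set of ideals $\{P_k\}_{k\in I}$ is Zariski dense in $\Lambda_0$ (i.e. $\bigcap_{k\in I}P_k=0$).
   Context: $A=\mathbb F_q[T]$ with $q$ a power of the prime $p$, $\varpi$ monic irreducible, $\mathfrak p=(\varpi)$, $A_{\mathfrak p}$ the completion. $\Lambda_0=A_{\mathfrak p}\llbracket1+\mathfrak pA_{\mathfrak p}\rrbracket=\varprojlim_mA_{\mathfrak p}/\mathfrak p^m[(1+\mathfrak p)/(1+\mathfrak p^m)]$ is the Iwasawa algebra of the pro-$p$ group $1+\mathfrak pA_{\mathfrak p}$ (a $\mathbb Z_p$-module, so $u^s$ makes sense for $s\in\mathbb Z_p$). $\mathcal C(\mathbb Z_p,A_{\mathfrak p})$ is the ring of continuous functions $\mathbb Z_p\to A_{\mathfrak p}$. For $k\in\mathbb Z_p$, $P_k=\ker(f_k)$ where $f_k:\Lambda_0\to A_{\mathfrak p}$ is the continuous $A_{\mathfrak p}$-algebra map with $[u]\mapsto u^k$. *)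

theory Defs
  imports "HOL-Computational_Algebra.Polynomial" "HOL-Algebra.Ring" "HOL-Algebra.RingHom"
begin

text \<open>
  Conventions.  F_q is a finite field type 'k; A = F_q[T] is 'k poly; the characteristic
  p is CHAR('k).  The prime w (varpi) is a monic irreducible polynomial.

  * A_p (completion of A at w) = inverse limit of A / w^m, represented by compatible
    sequences of canonical residues  x :: nat => 'k poly  with  x m = x m mod w^m  and
    x m = x (Suc m) mod w^m.
  * Z_p = inverse limit of Z / p^n, represented by compatible sequences of residues
    z :: nat => nat with z n < p^n and z n = z (Suc n) mod p^n.
  * (1+w)/(1+w^m) is represented by canonical residues g mod w^m with g = 1 mod w.
  * Lambda_0 = inverse limit over m of (A/w^m)[(1+w)/(1+w^m)], an element being a
    compatible family of finitely supported coefficient functions.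
\<close>

definition Ap_carrier :: "'k::{finite,field} poly \<Rightarrow> (nat \<Rightarrow> 'k poly) set" where
  "Ap_carrier w = {x. \<forall>m. x m mod w ^ m = x m \<and> x (Suc m) mod w ^ m = x m}"

definition ap_zero :: "nat \<Rightarrow> 'k::{finite,field} poly" where
  "ap_zero = (\<lambda>m. 0)"

definition ap_one :: "'k::{finite,field} poly \<Rightarrow> nat \<Rightarrow> 'k poly" where
  "ap_one w = (\<lambda>m. 1 mod w ^ m)"

definition ap_add :: "'k::{finite,field} poly \<Rightarrow> (nat \<Rightarrow> 'k poly) \<Rightarrow> (nat \<Rightarrow> 'k poly) \<Rightarrow> nat \<Rightarrow> 'k poly" where
  "ap_add w x y = (\<lambda>m. (x m + y m) mod w ^ m)"

definition ap_mult :: "'k::{finite,field} poly \<Rightarrow> (nat \<Rightarrow> 'k poly) \<Rightarrow> (nat \<Rightarrow> 'k poly) \<Rightarrow> nat \<Rightarrow> 'k poly" where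
  "ap_mult w x y = (\<lambda>m. (x m * y m) mod w ^ m)"

definition U1 :: "'k::{finite,field} poly \<Rightarrow> (nat \<Rightarrow> 'k poly) set" where
  "U1 w = {u \<in> Ap_carrier w. u 1 = 1 mod w}"

definition Zp :: "nat \<Rightarrow> (nat \<Rightarrow> nat) set" where
  "Zp p = {z. \<forall>n. z n < p ^ n \<and> z (Suc n) mod p ^ n = z n}"

text \<open>Density for the p-adic topology (basic opens: {t. t n = s n}).\<close>
definition dense_in_Zp :: "nat \<Rightarrow> (nat \<Rightarrow> nat) set \<Rightarrow> bool" where
  "dense_in_Zp p I \<longleftrightarrow> I \<subseteq> Zp p \<and> (\<forall>s\<in>Zp p. \<forall>n. \<exists>k\<in>I. k n = s n)"

text \<open>u^s for u in 1 + p A_p and s in Z_p: the m-th component is (u_m)^(s_m) mod w^m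
  (well defined since (1+w)/(1+w^m) has exponent dividing p^m).\<close>
definition upow :: "'k::{finite,field} poly \<Rightarrow> (nat \<Rightarrow> 'k poly) \<Rightarrow> (nat \<Rightarrow> nat) \<Rightarrow> nat \<Rightarrow> 'k poly" where
  "upow w u s = (\<lambda>m. (u m) ^ (s m) mod w ^ m)"

definition Gm :: "'k::{finite,field} poly \<Rightarrow> nat \<Rightarrow> 'k poly set" where
  "Gm w m = {g. g mod w ^ m = g \<and> g mod w = 1 mod w}"

definition Lambda0_carrier :: "'k::{finite,field} poly \<Rightarrow> (nat \<Rightarrow> 'k poly \<Rightarrow> 'k poly) set" where
  "Lambda0_carrier w = {lam.
      (\<forall>m g. g \<notin> Gm w m \<longrightarrow> lam m g = 0) \<and>
      (\<forall>m g. lam m g mod w ^ m = lam m g) \<and>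
      (\<forall>m. \<forall>g\<in>Gm w m.
          lam m g = (\<Sum>h\<in>{h\<in>Gm w (Suc m). h mod w ^ m = g}. lam (Suc m) h) mod w ^ m)}"

definition Lambda0 :: "'k::{finite,field} poly \<Rightarrow> (nat \<Rightarrow> 'k poly \<Rightarrow> 'k poly) ring" where
  "Lambda0 w = \<lparr> carrier = Lambda0_carrier w,
     mult = (\<lambda>lam mu. \<lambda>m g. if g \<in> Gm w m then
               (\<Sum>a\<in>Gm w m. \<Sum>b\<in>Gm w m.
                   if (a * b) mod w ^ m = g then lam m a * mu m b else 0) mod w ^ m
             else 0),
     one = (\<lambda>m g. if g \<in> Gm w m \<and> g = 1 mod w ^ m then 1 mod w ^ m else 0),
     zero = (\<lambda>m g. 0),
     add = (\<lambda>lam mu. \<lambda>m g. (lam m g + mu m g) mod w ^ m) \<rparr>"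

definition grp :: "'k::{finite,field} poly \<Rightarrow> (nat \<Rightarrow> 'k poly) \<Rightarrow> nat \<Rightarrow> 'k poly \<Rightarrow> 'k poly" where
  "grp w u = (\<lambda>m g. if g \<in> Gm w m \<and> g = u m then 1 mod w ^ m else 0)"

definition lam_smult :: "'k::{finite,field} poly \<Rightarrow> (nat \<Rightarrow> 'k poly) \<Rightarrow> (nat \<Rightarrow> 'k poly \<Rightarrow> 'k poly) \<Rightarrow> nat \<Rightarrow> 'k poly \<Rightarrow> 'k poly" where
  "lam_smult w a lam = (\<lambda>m g. (a m * lam m g) mod w ^ m)"

definition CZ_carrier :: "'k::{finite,field} poly \<Rightarrow> ((nat \<Rightarrow> nat) \<Rightarrow> nat \<Rightarrow> 'k poly) set" where
  "CZ_carrier w = {f.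
      (\<forall>s\<in>Zp CHAR('k). f s \<in> Ap_carrier w) \<and>
      (\<forall>s. s \<notin> Zp CHAR('k) \<longrightarrow> f s = ap_zero) \<and>
      (\<forall>s\<in>Zp CHAR('k). \<forall>m. \<exists>n. \<forall>t\<in>Zp CHAR('k). t n = s n \<longrightarrow> f t m = f s m)}"

definition CZ :: "'k::{finite,field} poly \<Rightarrow> ((nat \<Rightarrow> nat) \<Rightarrow> nat \<Rightarrow> 'k poly) ring" where
  "CZ w = \<lparr> carrier = CZ_carrier w,
     mult = (\<lambda>f h s. if s \<in> Zp CHAR('k) then ap_mult w (f s) (h s) else ap_zero),
     one = (\<lambda>s. if s \<in> Zp CHAR('k) then ap_one w else ap_zero),
     zero = (\<lambda>s. ap_zero),
     add = (\<lambda>f h s. if s \<in> Zp CHAR('k) then ap_add w (f s) (h s) else ap_zero) \<rparr>"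

definition cz_smult :: "'k::{finite,field} poly \<Rightarrow> (nat \<Rightarrow> 'k poly) \<Rightarrow> ((nat \<Rightarrow> nat) \<Rightarrow> nat \<Rightarrow> 'k poly) \<Rightarrow> (nat \<Rightarrow> nat) \<Rightarrow> nat \<Rightarrow> 'k poly" where
  "cz_smult w a f = (\<lambda>s. if s \<in> Zp CHAR('k) then ap_mult w a (f s) else ap_zero)"

text \<open>f_k : Lambda_0 -> A_p, the continuous A_p-algebra map with [u] |-> u^k; on level m
  it sends sum_g c_g [g] to sum_g c_g g^(k_m) mod w^m.\<close>
definition fk :: "'k::{finite,field} poly \<Rightarrow> (nat \<Rightarrow> nat) \<Rightarrow> (nat \<Rightarrow> 'k poly \<Rightarrow> 'k poly) \<Rightarrow> nat \<Rightarrow> 'k poly" where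
  "fk w k lam = (\<lambda>m. (\<Sum>g\<in>Gm w m. lam m g * g ^ (k m)) mod w ^ m)"

definition Pk :: "'k::{finite,field} poly \<Rightarrow> (nat \<Rightarrow> nat) \<Rightarrow> (nat \<Rightarrow> 'k poly \<Rightarrow> 'k poly) set" where
  "Pk w k = {lam \<in> Lambda0_carrier w. fk w k lam = ap_zero}"

definition iota :: "'k::{finite,field} poly \<Rightarrow> (nat \<Rightarrow> 'k poly \<Rightarrow> 'k poly) \<Rightarrow> (nat \<Rightarrow> nat) \<Rightarrow> nat \<Rightarrow> 'k poly" where
  "iota w lam = (\<lambda>s. if s \<in> Zp CHAR('k) then
                   (\<lambda>m. (\<Sum>g\<in>Gm w m. lam m g * g ^ (s m)) mod w ^ m) else ap_zero)"

end

theory Submission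
  imports Defs "HOL-Computational_Algebra.Polynomial_Factorial" "HOL-Number_Theory.Cong"
begin

text \<open>
  Pairing the level-m component of lambda with the character [g] |-> g^j gives a moment
  sum_g lambda_m(g) g^j.  Modulo w^m it depends on j only modulo p^m, because g^(p^m) = 1
  mod w^m when g = 1 mod w, and it is compatible between the levels; hence iota(lambda)(s)
  = f_s(lambda) is a well-defined continuous function of s, and iota is a ring homomorphism
  because the characters are multiplicative.

  For injectivity, if all moments of lambda vanish modulo w^N then so does
  sum_h lambda_N(h) P(h) for every polynomial P.  Using Fermat's little theorem in A/w and
  p-power Frobenius one builds, for every M, a function f such that w^e f is a polynomial
  and f(t) is the indicator of w^M | t modulo w^M; pairing lambda at level M + e with
  f(t - g) isolates lambda_M(g).  Density of the P_k follows since f_k(lambda) at level m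
  only depends on k mod p^m.
\<close>

section \<open>Frobenius in prime characteristic\<close>

lemma power_CHAR_pow_diff:
  fixes x y :: "'a::comm_ring_1"
  assumes "prime CHAR('a)"
  shows "(x - y) ^ (CHAR('a) ^ n) = x ^ (CHAR('a) ^ n) - y ^ (CHAR('a) ^ n)"
proof -
  have "x ^ (CHAR('a) ^ n) = (x - y + y) ^ (CHAR('a) ^ n)"
    by simp
  also have "\<dots> = (x - y) ^ (CHAR('a) ^ n) + y ^ (CHAR('a) ^ n)"
    by (rule freshmans_dream'[OF assms refl])
  finally show ?thesis
    by (simp add: algebra_simps)
qed

lemma dvd_imp_power_dvd_power_CHAR_pow:
  fixes w x :: "'a::comm_ring_1"
  assumes "prime CHAR('a)" and "w dvd x"
  shows "w ^ n dvd x ^ (CHAR('a) ^ n)"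
proof -
  have "n \<le> CHAR('a) ^ n"
    using prime_gt_1_nat[OF assms(1)] by (simp add: less_imp_le_nat)
  hence "x ^ n dvd x ^ (CHAR('a) ^ n)"
    by (rule le_imp_power_dvd)
  with dvd_power_same[OF assms(2)] show ?thesis
    by (rule dvd_trans)
qed

lemma cong_one_imp_power_CHAR_pow_cong_one:
  fixes w h :: "'a::unique_euclidean_ring"
  assumes "prime CHAR('a)" and "[h = 1] (mod w)"
  shows "[h ^ (CHAR('a) ^ n) = 1] (mod w ^ n)"
  using dvd_imp_power_dvd_power_CHAR_pow[OF assms(1), of w "h - 1" n] assms
  by (simp add: cong_iff_dvd_diff power_CHAR_pow_diff)

lemma cong_one_imp_power_cong_power_mod_CHAR_pow:
  fixes w h :: "'a::unique_euclidean_ring"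
  assumes "prime CHAR('a)" and "[h = 1] (mod w)"
  shows "[h ^ j = h ^ (j mod CHAR('a) ^ n)] (mod w ^ n)"
proof -
  let ?q = "CHAR('a) ^ n"
  have "h ^ j = (h ^ ?q) ^ (j div ?q) * h ^ (j mod ?q)"
    by (simp add: mult_div_mod_eq flip: power_mult power_add)
  also have "[\<dots> = 1 ^ (j div ?q) * h ^ (j mod ?q)] (mod w ^ n)"
    using cong_one_imp_power_CHAR_pow_cong_one[OF assms]
    by (intro cong_scalar_right cong_pow)
  finally show ?thesis
    by simp
qed

section \<open>Residues of polynomials over a finite field\<close>

lemma prime_CHAR_poly: "prime CHAR('k::{finite,field} poly)"
  by (simp add: prime_CHAR_semidom finite_imp_CHAR_pos)

lemma finite_degree_less: "finite {g :: 'a::{finite,zero} poly. degree g < n}"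
proof -
  have "{g :: 'a poly. degree g < n} \<subseteq> Poly ` {xs. length xs = n}"
  proof
    fix g :: "'a poly"
    assume "g \<in> {g. degree g < n}"
    hence "g = Poly (map (coeff g) [0..<n])"
      by (intro poly_eqI) (auto simp: nth_default_def coeff_eq_0)
    thus "g \<in> Poly ` {xs. length xs = n}"
      by force
  qed
  moreover have "finite (Poly ` {xs :: 'a list. length xs = n})"
    using finite_lists_length_eq[of "UNIV :: 'a set" n] by simp
  ultimately show ?thesis
    by (rule finite_subset)
qed

lemma finite_poly_residues:
  fixes d :: "'k::{finite,field} poly"
  assumes "d \<noteq> 0"
  shows "finite {g. g mod d = g}"
proof -
  have "{g. g mod d = g} \<subseteq> {g. degree g < degree d} \<union> {0}"
  proof
    fix g
    assume "g \<in> {g. g mod d = g}"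
    thus "g \<in> {g. degree g < degree d} \<union> {0}"
      using degree_mod_less'[OF assms, of g] by (cases "g = 0") auto
  qed
  thus ?thesis
    by (rule finite_subset) (simp add: finite_degree_less)
qed

lemma poly_power_cong_one_bounded:
  fixes w u :: "'k::{finite,field} poly"
  assumes "prime_elem w" and "\<not> w dvd u"
  obtains e where "0 < e" and "e \<le> card {r. r mod w = r}" and "[u ^ e = 1] (mod w)"
proof -
  define R where "R = {r :: 'k poly. r mod w = r}"
  have "finite R"
    unfolding R_def using assms(1) by (intro finite_poly_residues) auto
  have "(\<lambda>i. u ^ i mod w) ` {0..card R} \<subseteq> R"
    by (auto simp: R_def)
  moreover have "card R < card {0..card R}"
    by simp
  ultimately have "\<not> inj_on (\<lambda>i. u ^ i mod w) {0..card R}"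
    using card_inj_on_le[OF _ _ \<open>finite R\<close>] by (meson not_le)
  then obtain a b where ab: "a \<noteq> b" "a \<le> card R" "b \<le> card R" "[u ^ a = u ^ b] (mod w)"
    unfolding inj_on_def cong_def by auto
  define i j where "i = min a b" and "j = max a b"
  have ij: "i < j" "j \<le> card R" "[u ^ j = u ^ i] (mod w)"
    using ab unfolding i_def j_def by (auto simp: min_def max_def cong_sym_eq)
  have "w dvd u ^ i * (u ^ (j - i) - 1)"
    using ij by (simp add: cong_iff_dvd_diff algebra_simps flip: power_add)
  moreover have "\<not> w dvd u ^ i"
    using assms prime_elem_dvd_power by blast
  ultimately have "[u ^ (j - i) = 1] (mod w)"
    using assms(1) prime_elem_dvd_mult_iff by (auto simp: cong_iff_dvd_diff)
  with that[of "j - i"] ij show ?thesis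
    unfolding R_def by linarith
qed

lemma poly_fermat:
  fixes w u :: "'k::{finite,field} poly"
  assumes "prime_elem w" and "\<not> w dvd u"
  shows "[u ^ fact (card {r. r mod w = r}) = 1] (mod w)"
proof -
  obtain e where e: "0 < e" "e \<le> card {r. r mod w = r}" "[u ^ e = 1] (mod w)"
    using poly_power_cong_one_bounded[OF assms] .
  have "e dvd fact (card {r. r mod w = r})"
    using e(1,2) by (intro dvd_fact) simp_all
  then obtain k where k: "fact (card {r. r mod w = r}) = e * k" ..
  have "[(u ^ e) ^ k = 1 ^ k] (mod w)"
    using e(3) by (rule cong_pow)
  thus ?thesis
    by (simp add: k power_mult)
qed

section \<open>Functions that are polynomial up to a power of w\<close>

text \<open>Functions given by a polynomial with coefficients in A[1/w].\<close>
definition scaled_poly_fun :: "'a::comm_ring_1 \<Rightarrow> ('a \<Rightarrow> 'a) \<Rightarrow> bool" where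
  "scaled_poly_fun w f \<longleftrightarrow> (\<exists>P e. \<forall>t. poly P t = w ^ e * f t)"

lemma scaled_poly_fun_const: "scaled_poly_fun w (\<lambda>t. c)"
  unfolding scaled_poly_fun_def by (intro exI[of _ "[:c:]"] exI[of _ 0]) simp

lemma scaled_poly_fun_ident: "scaled_poly_fun w (\<lambda>t. t)"
  unfolding scaled_poly_fun_def by (intro exI[of _ "[:0, 1:]"] exI[of _ 0]) simp

lemma scaled_poly_fun_add:
  assumes "scaled_poly_fun w f" and "scaled_poly_fun w g"
  shows "scaled_poly_fun w (\<lambda>t. f t + g t)"
proof -
  obtain P e Q d where P: "\<And>t. poly P t = w ^ e * f t" and Q: "\<And>t. poly Q t = w ^ d * g t"
    using assms unfolding scaled_poly_fun_def by blast
  have "poly (smult (w ^ d) P + smult (w ^ e) Q) t = w ^ (e + d) * (f t + g t)" for t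
    by (simp add: P Q algebra_simps power_add)
  thus ?thesis
    unfolding scaled_poly_fun_def by blast
qed

lemma scaled_poly_fun_mult:
  assumes "scaled_poly_fun w f" and "scaled_poly_fun w g"
  shows "scaled_poly_fun w (\<lambda>t. f t * g t)"
proof -
  obtain P e Q d where P: "\<And>t. poly P t = w ^ e * f t" and Q: "\<And>t. poly Q t = w ^ d * g t"
    using assms unfolding scaled_poly_fun_def by blast
  have "poly (P * Q) t = w ^ (e + d) * (f t * g t)" for t
    by (simp add: P Q algebra_simps power_add)
  thus ?thesis
    unfolding scaled_poly_fun_def by blast
qed

lemma scaled_poly_fun_diff:
  assumes "scaled_poly_fun w f" and "scaled_poly_fun w g"
  shows "scaled_poly_fun w (\<lambda>t. f t - g t)"
  using scaled_poly_fun_add[OF assms(1) scaled_poly_fun_mult[OF scaled_poly_fun_const assms(2)],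
      of "- 1"]
  by simp

lemma scaled_poly_fun_power:
  assumes "scaled_poly_fun w f"
  shows "scaled_poly_fun w (\<lambda>t. f t ^ n)"
  by (induction n) (simp_all add: scaled_poly_fun_const scaled_poly_fun_mult assms)

lemma scaled_poly_fun_div_power:
  fixes w :: "'a::{comm_ring_1,algebraic_semidom}"
  assumes "scaled_poly_fun w f" and "\<And>t. w ^ k dvd f t"
  shows "scaled_poly_fun w (\<lambda>t. f t div w ^ k)"
proof -
  obtain P e where P: "\<And>t. poly P t = w ^ e * f t"
    using assms(1) unfolding scaled_poly_fun_def by blast
  have "poly P t = w ^ (e + k) * (f t div w ^ k)" for t
  proof -
    have "w ^ k * (f t div w ^ k) = f t"
      using assms(2) by (rule dvd_mult_div_cancel)
    thus ?thesis
      by (simp add: P power_add mult.assoc)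
  qed
  thus ?thesis
    unfolding scaled_poly_fun_def by blast
qed

lemma scaled_poly_fun_shift:
  assumes "scaled_poly_fun w f"
  shows "scaled_poly_fun w (\<lambda>t. f (t - a))"
proof -
  obtain P e where P: "\<And>t. poly P t = w ^ e * f t"
    using assms unfolding scaled_poly_fun_def by blast
  have "poly (pcompose P [:- a, 1:]) t = w ^ e * f (t - a)" for t
    by (simp add: poly_pcompose P)
  thus ?thesis
    unfolding scaled_poly_fun_def by blast
qed

lemma scaled_poly_fun_lift_indicator:
  fixes w :: "'a::unique_euclidean_ring"
  assumes "prime CHAR('a)" and "scaled_poly_fun w F" and "\<And>t. [F t = of_bool (S t)] (mod w)"
  shows "\<exists>f. scaled_poly_fun w f \<and> (\<forall>t. [f t = of_bool (S t)] (mod w ^ K))"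
proof (intro exI conjI allI)
  show "scaled_poly_fun w (\<lambda>t. F t ^ (CHAR('a) ^ K))"
    using assms(2) by (rule scaled_poly_fun_power)
  fix t
  show "[F t ^ (CHAR('a) ^ K) = of_bool (S t)] (mod w ^ K)"
  proof (cases "S t")
    case True
    thus ?thesis
      using cong_one_imp_power_CHAR_pow_cong_one[OF assms(1)] assms(3)[of t] by simp
  next
    case False
    thus ?thesis
      using dvd_imp_power_dvd_power_CHAR_pow[OF assms(1)] assms(3)[of t] by (simp add: cong_0_iff)
  qed
qed

text \<open>For t = w^M u, f * t div w^M is congruent to u modulo w, and by Fermat's little
  theorem 1 - u^E is the indicator of w | u modulo w.\<close>
lemma fermat_indicator_Suc_cong:
  fixes w :: "'k::{finite,field} poly"
  assumes w: "prime_elem w" and f: "[f = of_bool (w ^ M dvd t)] (mod w ^ Suc M)"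
  defines "E \<equiv> fact (card {r :: 'k poly. r mod w = r})"
  shows "[f * (1 - (f * t div w ^ M) ^ E) = of_bool (w ^ Suc M dvd t)] (mod w)"
proof (cases "w ^ M dvd t")
  case False
  have "w ^ M dvd w ^ Suc M"
    by (simp add: le_imp_power_dvd)
  with False have "\<not> w ^ Suc M dvd t"
    using dvd_trans by blast
  from False f have "[f = 0] (mod w ^ Suc M)"
    by simp
  hence "[f = 0] (mod w)"
    by (rule cong_dvd_modulus) simp
  hence "[f * (1 - (f * t div w ^ M) ^ E) = 0 * (1 - (f * t div w ^ M) ^ E)] (mod w)"
    by (rule cong_scalar_right)
  with \<open>\<not> w ^ Suc M dvd t\<close> show ?thesis
    by simp
next
  case True
  then obtain u where t: "t = w ^ M * u" ..
  have "w \<noteq> 0"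
    using w by (simp add: prime_elem_def)
  from f True have "[f = 1] (mod w ^ Suc M)"
    by simp
  hence f1: "[f = 1] (mod w)"
    by (rule cong_dvd_modulus) simp
  have "f * t div w ^ M = f * u"
    unfolding t using \<open>w \<noteq> 0\<close>
    by (metis mult.left_commute nonzero_mult_div_cancel_left power_not_zero)
  with cong_scalar_right[OF f1, of u] have G: "[f * t div w ^ M = u] (mod w)"
    by simp
  have Suc_iff: "w ^ Suc M dvd t \<longleftrightarrow> w dvd u"
    using \<open>w \<noteq> 0\<close> by (simp add: t power_Suc2)
  show ?thesis
  proof (cases "w dvd u")
    case True
    hence "w dvd f * t div w ^ M"
      using cong_dvd_iff[OF G] by simp
    hence "[(f * t div w ^ M) ^ E = 0] (mod w)"
      unfolding cong_0_iff E_def by (rule dvd_trans) simp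
    with f1 have "[f * (1 - (f * t div w ^ M) ^ E) = 1 * (1 - 0)] (mod w)"
      by (intro cong_mult cong_diff cong_refl)
    thus ?thesis
      using True Suc_iff by simp
  next
    case False
    hence "[(f * t div w ^ M) ^ E = 1] (mod w)"
      using poly_fermat[OF w] cong_dvd_iff[OF G] unfolding E_def by blast
    hence "[f * (1 - (f * t div w ^ M) ^ E) = f * (1 - 1)] (mod w)"
      by (intro cong_mult cong_diff cong_refl)
    thus ?thesis
      using False Suc_iff by simp
  qed
qed

lemma scaled_poly_indicator_step:
  fixes w :: "'k::{finite,field} poly"
  assumes w: "prime_elem w" and "scaled_poly_fun w f"
    and f: "\<And>t. [f t = of_bool (w ^ M dvd t)] (mod w ^ Suc M)"
  shows "\<exists>F. scaled_poly_fun w F \<and> (\<forall>t. [F t = of_bool (w ^ Suc M dvd t)] (mod w))"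
proof (intro exI conjI allI)
  define E :: nat where "E = fact (card {r :: 'k poly. r mod w = r})"
  have "w ^ M dvd f t * t" for t
  proof (cases "w ^ M dvd t")
    case False
    with f[of t] have "w ^ Suc M dvd f t"
      by (simp add: cong_0_iff)
    moreover have "w ^ M dvd w ^ Suc M"
      by (simp add: le_imp_power_dvd)
    ultimately show ?thesis
      using dvd_trans dvd_mult2 by blast
  qed simp
  with assms(2) show "scaled_poly_fun w (\<lambda>t. f t * (1 - (f t * t div w ^ M) ^ E))"
    by (intro scaled_poly_fun_mult scaled_poly_fun_diff scaled_poly_fun_power
        scaled_poly_fun_div_power scaled_poly_fun_const scaled_poly_fun_ident)
  show "[f t * (1 - (f t * t div w ^ M) ^ E) = of_bool (w ^ Suc M dvd t)] (mod w)" for t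
    unfolding E_def using w f by (rule fermat_indicator_Suc_cong)
qed

lemma scaled_poly_indicator:
  fixes w :: "'k::{finite,field} poly"
  assumes "prime_elem w"
  shows "\<exists>f. scaled_poly_fun w f \<and> (\<forall>t. [f t = of_bool (w ^ M dvd t)] (mod w ^ K))"
proof (induction M arbitrary: K)
  case 0
  show ?case
    by (intro exI[of _ "\<lambda>t. 1"] conjI scaled_poly_fun_const) simp
next
  case (Suc M)
  obtain f where "scaled_poly_fun w f" "\<And>t. [f t = of_bool (w ^ M dvd t)] (mod w ^ Suc M)"
    using Suc.IH by blast
  then obtain F where "scaled_poly_fun w F" "\<And>t. [F t = of_bool (w ^ Suc M dvd t)] (mod w)"
    using scaled_poly_indicator_step[OF assms] by blast
  thus ?case
    by (rule scaled_poly_fun_lift_indicator[OF prime_CHAR_poly])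
qed

section \<open>The levels of Lambda0 and their moments\<close>

lemma Gm_iff: "g \<in> Gm w m \<longleftrightarrow> g mod w ^ m = g \<and> [g = 1] (mod w)"
  by (simp add: Gm_def cong_def)

lemma cong_one_imp_mod_in_Gm:
  assumes "0 < m" and "[h = 1] (mod w)"
  shows "h mod w ^ m \<in> Gm w m"
proof -
  have "[h mod w ^ m = h] (mod w)"
    by (rule cong_dvd_modulus[of _ _ "w ^ m"]) (simp_all add: assms(1))
  hence "[h mod w ^ m = 1] (mod w)"
    using assms(2) by (rule cong_trans)
  thus ?thesis
    by (simp add: Gm_iff)
qed

lemma Ap_carrier_cong:
  assumes "x \<in> Ap_carrier w" and "m \<le> n"
  shows "[x n = x m] (mod w ^ m)"
  using assms(2)
proof (induction n rule: dec_induct)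
  case (step n)
  have "[x (Suc n) = x n] (mod w ^ n)"
    using assms(1) by (simp add: Ap_carrier_def cong_def)
  from this le_imp_power_dvd[OF step(1)] have "[x (Suc n) = x n] (mod w ^ m)"
    by (rule cong_dvd_modulus)
  from this step(3) show ?case
    by (rule cong_trans)
qed simp

lemma U1_in_Gm:
  assumes "u \<in> U1 w" and "0 < m"
  shows "u m \<in> Gm w m"
proof -
  have "[u m = u 1] (mod w)"
    using Ap_carrier_cong[of u w 1 m] assms by (simp add: U1_def)
  moreover have "[u 1 = 1] (mod w)"
    using assms(1) by (simp add: U1_def cong_def)
  ultimately have "[u m = 1] (mod w)"
    by (rule cong_trans)
  thus ?thesis
    using assms(1) by (simp add: Gm_iff U1_def Ap_carrier_def)
qed

lemma Lambda0_carrier_mod: "lam \<in> Lambda0_carrier w \<Longrightarrow> lam m g mod w ^ m = lam m g"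
  unfolding Lambda0_carrier_def by blast

lemma Lambda0_carrier_outside: "lam \<in> Lambda0_carrier w \<Longrightarrow> g \<notin> Gm w m \<Longrightarrow> lam m g = 0"
  unfolding Lambda0_carrier_def by blast

text \<open>The defining relations of the projective system Lambda0, read as congruences; unlike
  membership in the carrier, they are preserved by differences.\<close>
definition Lambda0_compatible ::
    "'k::{finite,field} poly \<Rightarrow> (nat \<Rightarrow> 'k poly \<Rightarrow> 'k poly) \<Rightarrow> bool" where
  "Lambda0_compatible w c \<longleftrightarrow> (\<forall>m. \<forall>g\<in>Gm w m.
     [c m g = (\<Sum>h\<in>{h \<in> Gm w (Suc m). h mod w ^ m = g}. c (Suc m) h)] (mod w ^ m))"

lemma Lambda0_carrier_compatible:
  assumes "lam \<in> Lambda0_carrier w"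
  shows "Lambda0_compatible w lam"
  unfolding Lambda0_compatible_def
proof (intro allI ballI)
  fix m g
  assume "g \<in> Gm w m"
  with assms have "lam m g = (\<Sum>h\<in>{h \<in> Gm w (Suc m). h mod w ^ m = g}. lam (Suc m) h) mod w ^ m"
    unfolding Lambda0_carrier_def by blast
  thus "[lam m g = (\<Sum>h\<in>{h \<in> Gm w (Suc m). h mod w ^ m = g}. lam (Suc m) h)] (mod w ^ m)"
    by simp
qed

lemma Lambda0_compatible_diff:
  assumes "Lambda0_compatible w lam" and "Lambda0_compatible w mu"
  shows "Lambda0_compatible w (\<lambda>m g. lam m g - mu m g)"
  using assms unfolding Lambda0_compatible_def by (simp add: sum_subtractf cong_diff)

definition moment ::
    "'k::{finite,field} poly \<Rightarrow> (nat \<Rightarrow> 'k poly \<Rightarrow> 'k poly) \<Rightarrow> nat \<Rightarrow> nat \<Rightarrow> 'k poly" where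
  "moment w lam m j = (\<Sum>g\<in>Gm w m. lam m g * g ^ j)"

lemma iota_apply: "s \<in> Zp CHAR('k) \<Longrightarrow> iota w lam s m = moment w lam m (s m) mod w ^ m"
  for w :: "'k::{finite,field} poly"
  by (simp add: iota_def moment_def)

lemma iota_eq_fk: "s \<in> Zp CHAR('k) \<Longrightarrow> iota w lam s = fk w s lam"
  for w :: "'k::{finite,field} poly"
  by (simp add: iota_def fk_def)

lemma iota_eqI:
  fixes w :: "'k::{finite,field} poly"
  assumes "\<And>s. s \<notin> Zp CHAR('k) \<Longrightarrow> F s = ap_zero"
    and "\<And>s m. s \<in> Zp CHAR('k) \<Longrightarrow> moment w lam m (s m) mod w ^ m = F s m"
  shows "iota w lam = F"
proof
  fix s
  show "iota w lam s = F s"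
  proof (cases "s \<in> Zp CHAR('k)")
    case True
    thus ?thesis
      using assms(2) by (simp add: fun_eq_iff iota_apply)
  next
    case False
    thus ?thesis
      using assms(1) by (simp add: iota_def)
  qed
qed

lemma mod_power_in_Zp: "0 < p \<Longrightarrow> (\<lambda>n. j mod p ^ n) \<in> Zp p"
  by (simp add: Zp_def mod_mod_cancel le_imp_power_dvd)

lemma moment_cong_exponent:
  fixes w :: "'k::{finite,field} poly"
  assumes "j mod CHAR('k) ^ m = j' mod CHAR('k) ^ m"
  shows "[moment w lam m j = moment w lam m j'] (mod w ^ m)"
  unfolding moment_def
proof (intro cong_sum cong_scalar_left)
  fix g
  assume "g \<in> Gm w m"
  hence "[g = 1] (mod w)"
    by (simp add: Gm_iff)
  have "[g ^ j = g ^ (j' mod CHAR('k) ^ m)] (mod w ^ m)"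
    using cong_one_imp_power_cong_power_mod_CHAR_pow[OF prime_CHAR_poly \<open>[g = 1] (mod w)\<close>, of j m] assms
    by simp
  moreover have "[g ^ j' = g ^ (j' mod CHAR('k) ^ m)] (mod w ^ m)"
    using cong_one_imp_power_cong_power_mod_CHAR_pow[OF prime_CHAR_poly \<open>[g = 1] (mod w)\<close>, of j' m]
    by simp
  ultimately show "[g ^ j = g ^ j'] (mod w ^ m)"
    by (rule cong_trans[OF _ cong_sym])
qed

lemma iota_eq_imp_moment_cong:
  fixes w :: "'k::{finite,field} poly"
  assumes "iota w lam = iota w mu"
  shows "[moment w lam N j = moment w mu N j] (mod w ^ N)"
proof -
  define s where "s n = j mod CHAR('k) ^ n" for n
  have s: "s \<in> Zp CHAR('k)"
    unfolding s_def using prime_CHAR_poly[where 'k = 'k]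
    by (intro mod_power_in_Zp) (simp add: prime_gt_0_nat)
  have "[moment w lam N j = moment w lam N (s N)] (mod w ^ N)"
    by (rule moment_cong_exponent) (simp add: s_def)
  also have "[moment w lam N (s N) = moment w mu N (s N)] (mod w ^ N)"
    using fun_cong[OF assms, of s] s by (simp add: fun_eq_iff iota_apply cong_def)
  also have "[moment w mu N (s N) = moment w mu N j] (mod w ^ N)"
    by (rule moment_cong_exponent) (simp add: s_def)
  finally show ?thesis .
qed

lemma moment_add:
  "[moment w (lam \<oplus>\<^bsub>Lambda0 w\<^esub> mu) m j = moment w lam m j + moment w mu m j] (mod w ^ m)"
proof -
  have "[moment w (lam \<oplus>\<^bsub>Lambda0 w\<^esub> mu) m j = (\<Sum>g\<in>Gm w m. (lam m g + mu m g) * g ^ j)] (mod w ^ m)"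
    unfolding moment_def by (intro cong_sum cong_scalar_right) (simp add: Lambda0_def)
  thus ?thesis
    by (simp add: moment_def sum.distrib distrib_right)
qed

lemma moment_smult: "[moment w (lam_smult w a lam) m j = a m * moment w lam m j] (mod w ^ m)"
proof -
  have "[moment w (lam_smult w a lam) m j = (\<Sum>g\<in>Gm w m. a m * lam m g * g ^ j)] (mod w ^ m)"
    unfolding moment_def by (intro cong_sum cong_scalar_right) (simp add: lam_smult_def)
  thus ?thesis
    by (simp add: moment_def sum_distrib_left mult.assoc)
qed

lemma iota_add: "iota w (lam \<oplus>\<^bsub>Lambda0 w\<^esub> mu) = iota w lam \<oplus>\<^bsub>CZ w\<^esub> iota w mu"
  by (rule iota_eqI) (simp_all add: CZ_def ap_add_def iota_apply mod_add_eq moment_add[unfolded cong_def])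

lemma iota_smult: "iota w (lam_smult w a lam) = cz_smult w a (iota w lam)"
  by (rule iota_eqI)
    (simp_all add: cz_smult_def ap_mult_def iota_apply mod_mult_right_eq moment_smult[unfolded cong_def])

locale irreducible_modulus =
  fixes w :: "'k::{finite,field} poly"
  assumes irreducible: "irreducible w"
begin

lemma prime_elem_w: "prime_elem w"
  using irreducible by (rule field_poly_irreducible_imp_prime)

lemma w_nonzero: "w \<noteq> 0"
  using prime_elem_w by (simp add: prime_elem_def)

lemma one_mod_power: "0 < m \<Longrightarrow> 1 mod w ^ m = (1 :: 'k poly)"
proof -
  assume "0 < m"
  have "degree w \<noteq> 0"
    using irreducible w_nonzero is_unit_iff_degree by (auto simp: irreducible_def)
  with \<open>0 < m\<close> show ?thesis
    by (intro mod_poly_less) (simp add: degree_power_eq w_nonzero)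
qed

lemma Gm_pos: "g \<in> Gm w m \<Longrightarrow> 0 < m"
proof (rule ccontr)
  assume "g \<in> Gm w m" and "\<not> 0 < m"
  hence "[0 = 1] (mod w)"
    by (auto simp: Gm_iff)
  hence "[1 = 0] (mod w)"
    by (rule cong_sym)
  hence "w dvd 1"
    by (simp add: cong_0_iff)
  thus False
    using prime_elem_w by (simp add: prime_elem_def)
qed

lemma one_in_Gm: "0 < m \<Longrightarrow> 1 \<in> Gm w m"
  using cong_one_imp_mod_in_Gm[of m 1 w] by (simp add: one_mod_power)

lemma finite_Gm: "finite (Gm w m)"
  by (rule finite_subset[OF _ finite_poly_residues[OF power_not_zero[OF w_nonzero]]])
    (auto simp: Gm_def)

lemma mod_in_Gm: "h \<in> Gm w n \<Longrightarrow> 0 < m \<Longrightarrow> h mod w ^ m \<in> Gm w m"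
  by (rule cong_one_imp_mod_in_Gm) (simp_all add: Gm_iff)

lemma mult_mod_in_Gm:
  assumes "a \<in> Gm w m" and "b \<in> Gm w m"
  shows "a * b mod w ^ m \<in> Gm w m"
proof (rule cong_one_imp_mod_in_Gm)
  show "0 < m"
    using assms(1) by (rule Gm_pos)
  show "[a * b = 1] (mod w)"
    using cong_mult[of a 1 w b 1] assms by (simp add: Gm_iff)
qed

lemma sum_Gm_group:
  assumes "0 < m"
  shows "sum H (Gm w n) = (\<Sum>g\<in>Gm w m. \<Sum>h\<in>{h \<in> Gm w n. h mod w ^ m = g}. H h)"
proof -
  have "(\<lambda>h. h mod w ^ m) ` Gm w n \<subseteq> Gm w m"
    using mod_in_Gm[OF _ assms] by blast
  from sum.group[OF finite_Gm finite_Gm this, of H] show ?thesis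
    by simp
qed

lemma sum_Gm_fibres_group:
  assumes "0 < M" and "M \<le> n"
  shows "(\<Sum>h'\<in>{h \<in> Gm w n. h mod w ^ M = g}. \<Sum>h\<in>{h \<in> Gm w N. h mod w ^ n = h'}. H h)
       = (\<Sum>h\<in>{h \<in> Gm w N. h mod w ^ M = g}. H h)"
proof -
  let ?A = "{h \<in> Gm w N. h mod w ^ M = g}" and ?B = "{h \<in> Gm w n. h mod w ^ M = g}"
  have mod_mod: "h mod w ^ n mod w ^ M = h mod w ^ M" for h :: "'k poly"
    using assms(2) by (simp add: mod_mod_cancel le_imp_power_dvd)
  have "(\<lambda>h. h mod w ^ n) ` ?A \<subseteq> ?B"
    using mod_in_Gm[of _ N n] assms mod_mod by auto
  have "(\<Sum>h'\<in>?B. \<Sum>h\<in>{h \<in> Gm w N. h mod w ^ n = h'}. H h)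
      = (\<Sum>h'\<in>?B. sum H {h \<in> ?A. h mod w ^ n = h'})"
    using mod_mod by (intro sum.cong refl arg_cong[where f = "sum H"]) auto
  also have "\<dots> = sum H ?A"
    using \<open>(\<lambda>h. h mod w ^ n) ` ?A \<subseteq> ?B\<close> by (intro sum.group) (simp_all add: finite_Gm)
  finally show ?thesis .
qed

lemma moment_Suc_cong:
  assumes "lam \<in> Lambda0_carrier w"
  shows "[moment w lam (Suc m) j = moment w lam m j] (mod w ^ m)"
proof (cases "m = 0")
  case False
  let ?fibre = "\<lambda>g. {h \<in> Gm w (Suc m). h mod w ^ m = g}"
  have "moment w lam (Suc m) j mod w ^ m
      = (\<Sum>g\<in>Gm w m. \<Sum>h\<in>?fibre g. lam (Suc m) h * h ^ j) mod w ^ m"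
    unfolding moment_def by (subst sum_Gm_group[of m]) (use False in simp_all)
  also have "\<dots> = (\<Sum>g\<in>Gm w m. (\<Sum>h\<in>?fibre g. lam (Suc m) h) * g ^ j) mod w ^ m"
    unfolding cong_def[symmetric] sum_distrib_right
  proof (intro cong_sum cong_scalar_left cong_pow)
    fix g h
    assume "h \<in> ?fibre g"
    thus "[h = g] (mod w ^ m)"
      by (auto simp: cong_def)
  qed
  also have "\<dots> = moment w lam m j mod w ^ m"
    unfolding cong_def[symmetric] moment_def
  proof (intro cong_sum cong_scalar_right)
    fix g
    assume "g \<in> Gm w m"
    with Lambda0_carrier_compatible[OF assms]
    have "[lam m g = (\<Sum>h\<in>?fibre g. lam (Suc m) h)] (mod w ^ m)"
      unfolding Lambda0_compatible_def by blast
    thus "[(\<Sum>h\<in>?fibre g. lam (Suc m) h) = lam m g] (mod w ^ m)"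
      by (rule cong_sym)
  qed
  finally show ?thesis
    unfolding cong_def .
qed simp

lemma iota_in_Ap_carrier:
  assumes lam: "lam \<in> Lambda0_carrier w" and s: "s \<in> Zp CHAR('k)"
  shows "iota w lam s \<in> Ap_carrier w"
proof -
  have "iota w lam s (Suc m) mod w ^ m = iota w lam s m" for m
  proof -
    have "s (Suc m) mod CHAR('k) ^ m = s m mod CHAR('k) ^ m"
      using s by (simp add: Zp_def)
    hence "[moment w lam m (s (Suc m)) = moment w lam m (s m)] (mod w ^ m)"
      by (rule moment_cong_exponent)
    with moment_Suc_cong[OF lam]
    have "[moment w lam (Suc m) (s (Suc m)) = moment w lam m (s m)] (mod w ^ m)"
      by (rule cong_trans)
    thus ?thesis
      using s by (simp add: iota_apply cong_def mod_mod_cancel le_imp_power_dvd)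
  qed
  thus ?thesis
    using s by (simp add: Ap_carrier_def iota_apply)
qed

lemma iota_in_CZ_carrier:
  assumes "lam \<in> Lambda0_carrier w"
  shows "iota w lam \<in> CZ_carrier w"
  unfolding CZ_carrier_def
proof (intro CollectI conjI ballI allI impI)
  fix s
  assume "s \<in> Zp CHAR('k)"
  thus "iota w lam s \<in> Ap_carrier w"
    by (rule iota_in_Ap_carrier[OF assms])
next
  fix s
  assume "s \<notin> Zp CHAR('k)"
  thus "iota w lam s = ap_zero"
    by (simp add: iota_def)
next
  fix s m
  assume "s \<in> Zp CHAR('k)"
  thus "\<exists>n. \<forall>t\<in>Zp CHAR('k). t n = s n \<longrightarrow> iota w lam t m = iota w lam s m"
    by (intro exI[of _ m]) (simp add: iota_apply)
qed

lemma moment_mult: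
  "[moment w (lam \<otimes>\<^bsub>Lambda0 w\<^esub> mu) m j = moment w lam m j * moment w mu m j] (mod w ^ m)"
proof -
  let ?G = "Gm w m" and ?W = "w ^ m"
  let ?conv = "\<lambda>g. \<Sum>a\<in>?G. \<Sum>b\<in>?G. if a * b mod ?W = g then lam m a * mu m b else 0"
  have "moment w (lam \<otimes>\<^bsub>Lambda0 w\<^esub> mu) m j mod ?W = (\<Sum>g\<in>?G. (?conv g mod ?W) * g ^ j) mod ?W"
    unfolding moment_def by (intro arg_cong[where f = "\<lambda>x. x mod ?W"] sum.cong) (simp_all add: Lambda0_def)
  also have "\<dots> = (\<Sum>g\<in>?G. ?conv g * g ^ j) mod ?W"
    unfolding cong_def[symmetric] by (intro cong_sum cong_scalar_right) simp
  also have "(\<Sum>g\<in>?G. ?conv g * g ^ j)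
      = (\<Sum>g\<in>?G. \<Sum>a\<in>?G. \<Sum>b\<in>?G. if a * b mod ?W = g then lam m a * mu m b * g ^ j else 0)"
    by (auto simp: sum_distrib_right intro!: sum.cong)
  also have "\<dots> = (\<Sum>a\<in>?G. \<Sum>b\<in>?G. \<Sum>g\<in>?G. if a * b mod ?W = g then lam m a * mu m b * g ^ j else 0)"
    by (subst sum.swap) (subst (2) sum.swap, rule refl)
  also have "\<dots> = (\<Sum>a\<in>?G. \<Sum>b\<in>?G. lam m a * mu m b * (a * b mod ?W) ^ j)"
    by (intro sum.cong refl) (simp add: finite_Gm mult_mod_in_Gm)
  also have "\<dots> mod ?W = (\<Sum>a\<in>?G. \<Sum>b\<in>?G. lam m a * mu m b * (a * b) ^ j) mod ?W"
    unfolding cong_def[symmetric] by (intro cong_sum cong_scalar_left cong_pow) simp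
  also have "(\<Sum>a\<in>?G. \<Sum>b\<in>?G. lam m a * mu m b * (a * b) ^ j) = moment w lam m j * moment w mu m j"
    by (simp add: moment_def sum_product power_mult_distrib mult_ac)
  finally show ?thesis
    unfolding cong_def .
qed

lemma iota_mult: "iota w (lam \<otimes>\<^bsub>Lambda0 w\<^esub> mu) = iota w lam \<otimes>\<^bsub>CZ w\<^esub> iota w mu"
  by (rule iota_eqI) (simp_all add: CZ_def ap_mult_def iota_apply mod_mult_eq moment_mult[unfolded cong_def])

lemma moment_one:
  assumes "0 < m"
  shows "moment w \<one>\<^bsub>Lambda0 w\<^esub> m j = 1"
proof -
  have "moment w \<one>\<^bsub>Lambda0 w\<^esub> m j = (\<Sum>g\<in>Gm w m. if g = 1 then 1 else 0)"
    unfolding moment_def by (rule sum.cong) (auto simp: Lambda0_def one_mod_power[OF assms])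
  thus ?thesis
    using one_in_Gm[OF assms] finite_Gm by simp
qed

lemma iota_one: "iota w \<one>\<^bsub>Lambda0 w\<^esub> = \<one>\<^bsub>CZ w\<^esub>"
proof (rule iota_eqI)
  fix s m
  show "moment w \<one>\<^bsub>Lambda0 w\<^esub> m (s m) mod w ^ m = \<one>\<^bsub>CZ w\<^esub> s m" if "s \<in> Zp CHAR('k)"
    using that by (cases "m = 0") (simp_all add: CZ_def ap_one_def moment_one)
qed (simp add: CZ_def)

lemma moment_grp:
  assumes "u \<in> U1 w" and "0 < m"
  shows "moment w (grp w u) m j = u m ^ j"
proof -
  have "moment w (grp w u) m j = (\<Sum>g\<in>Gm w m. if g = u m then u m ^ j else 0)"
    unfolding moment_def by (rule sum.cong) (auto simp: grp_def one_mod_power[OF assms(2)])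
  thus ?thesis
    using U1_in_Gm[OF assms] finite_Gm by simp
qed

lemma iota_grp:
  assumes "u \<in> U1 w"
  shows "iota w (grp w u) = (\<lambda>s. if s \<in> Zp CHAR('k) then upow w u s else ap_zero)"
proof (rule iota_eqI)
  fix s m
  show "moment w (grp w u) m (s m) mod w ^ m = (if s \<in> Zp CHAR('k) then upow w u s else ap_zero) m"
    if "s \<in> Zp CHAR('k)"
    using that by (cases "m = 0") (simp_all add: upow_def moment_grp[OF assms])
qed simp

lemma iota_ring_hom: "iota w \<in> ring_hom (Lambda0 w) (CZ w)"
proof (rule ring_hom_memI)
  show "iota w lam \<in> carrier (CZ w)" if "lam \<in> carrier (Lambda0 w)" for lam
    using that iota_in_CZ_carrier by (simp add: Lambda0_def CZ_def)
qed (simp_all add: iota_mult iota_add iota_one)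

end

section \<open>Injectivity and density\<close>

lemma iota_eq_if_fk_eq_on_dense:
  fixes w :: "'k::{finite,field} poly"
  assumes "dense_in_Zp CHAR('k) I" and "\<And>k. k \<in> I \<Longrightarrow> fk w k lam = fk w k mu"
  shows "iota w lam = iota w mu"
proof
  fix s
  show "iota w lam s = iota w mu s"
  proof (cases "s \<in> Zp CHAR('k)")
    case True
    show ?thesis
    proof
      fix m
      obtain k where k: "k \<in> I" "k m = s m"
        using assms(1) True unfolding dense_in_Zp_def by blast
      have "fk w s lam m = fk w k lam m" and "fk w s mu m = fk w k mu m"
        using k(2) by (simp_all add: fk_def)
      thus "iota w lam s m = iota w mu s m"
        using assms(2)[OF k(1)] True by (simp add: iota_eq_fk)
    qed
  qed (simp add: iota_def)
qed

lemma moment_poly_cong_zero: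
  assumes "\<And>j. [moment w c N j = 0] (mod w ^ N)"
  shows "[(\<Sum>h\<in>Gm w N. c N h * poly P h) = 0] (mod w ^ N)"
proof -
  have "(\<Sum>h\<in>Gm w N. c N h * poly P h) = (\<Sum>h\<in>Gm w N. \<Sum>i\<le>degree P. coeff P i * (c N h * h ^ i))"
    by (simp add: poly_altdef sum_distrib_left mult_ac)
  also have "\<dots> = (\<Sum>i\<le>degree P. coeff P i * moment w c N i)"
    by (subst sum.swap) (simp add: moment_def sum_distrib_left)
  finally have expand: "(\<Sum>h\<in>Gm w N. c N h * poly P h) = (\<Sum>i\<le>degree P. coeff P i * moment w c N i)" .
  have "[(\<Sum>i\<le>degree P. coeff P i * moment w c N i) = (\<Sum>i\<le>degree P. coeff P i * 0)] (mod w ^ N)"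
    using assms by (intro cong_sum cong_scalar_left)
  thus ?thesis
    by (simp add: expand)
qed

context irreducible_modulus
begin

lemma Lambda0_compatible_cong_sum_fibre:
  assumes compat: "Lambda0_compatible w c" and g: "g \<in> Gm w M" and "M \<le> N"
  shows "[c M g = (\<Sum>h\<in>{h \<in> Gm w N. h mod w ^ M = g}. c N h)] (mod w ^ M)"
  using \<open>M \<le> N\<close>
proof (induction N rule: dec_induct)
  case base
  have "{h \<in> Gm w M. h mod w ^ M = g} = {g}"
    using g by (auto simp: Gm_iff)
  thus ?case
    by simp
next
  case (step n)
  let ?A = "{h \<in> Gm w (Suc n). h mod w ^ M = g}" and ?B = "{h \<in> Gm w n. h mod w ^ M = g}"
  let ?fibre = "\<lambda>h'. {h \<in> Gm w (Suc n). h mod w ^ n = h'}"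
  have regroup: "(\<Sum>h'\<in>?B. \<Sum>h\<in>?fibre h'. c (Suc n) h) = (\<Sum>h\<in>?A. c (Suc n) h)"
    using Gm_pos[OF g] step(1) by (rule sum_Gm_fibres_group)
  have "[(\<Sum>h'\<in>?B. c n h') = (\<Sum>h'\<in>?B. \<Sum>h\<in>?fibre h'. c (Suc n) h)] (mod w ^ M)"
  proof (rule cong_sum)
    fix h'
    assume "h' \<in> ?B"
    with compat have "[c n h' = (\<Sum>h\<in>?fibre h'. c (Suc n) h)] (mod w ^ n)"
      unfolding Lambda0_compatible_def by blast
    from this le_imp_power_dvd[OF step(1)]
    show "[c n h' = (\<Sum>h\<in>?fibre h'. c (Suc n) h)] (mod w ^ M)"
      by (rule cong_dvd_modulus)
  qed
  with step(3) have "[c M g = (\<Sum>h'\<in>?B. \<Sum>h\<in>?fibre h'. c (Suc n) h)] (mod w ^ M)"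
    by (rule cong_trans)
  thus ?case
    by (simp only: regroup)
qed

text \<open>Pairing c with an indicator of the class of g modulo w^M isolates c M g; the indicator
  is polynomial up to a power w^e of w, which the moments absorb by going up to level M + e.\<close>
lemma Lambda0_compatible_coeff_cong_zero:
  assumes compat: "Lambda0_compatible w c" and moments: "\<And>N j. [moment w c N j = 0] (mod w ^ N)"
    and g: "g \<in> Gm w M"
  shows "[c M g = 0] (mod w ^ M)"
proof -
  obtain f where f: "scaled_poly_fun w f" "\<And>t. [f t = of_bool (w ^ M dvd t)] (mod w ^ M)"
    using scaled_poly_indicator[OF prime_elem_w] by blast
  obtain P e where P: "\<And>t. poly P t = w ^ e * f (t - g)"
    using scaled_poly_fun_shift[OF f(1), of g] unfolding scaled_poly_fun_def by blast
  define N where "N = M + e"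
  define T where "T = (\<Sum>h\<in>Gm w N. c N h * f (h - g))"
  define S where "S = (\<Sum>h\<in>{h \<in> Gm w N. h mod w ^ M = g}. c N h)"
  have "w ^ e * T = (\<Sum>h\<in>Gm w N. c N h * poly P h)"
    by (simp add: T_def P sum_distrib_left mult_ac)
  hence "w ^ e * w ^ M dvd w ^ e * T"
    using moment_poly_cong_zero[OF moments, of N P] by (simp add: cong_0_iff N_def power_add ac_simps)
  hence T_0: "[T = 0] (mod w ^ M)"
    using w_nonzero by (simp add: cong_0_iff)
  have class_iff: "h mod w ^ M = g \<longleftrightarrow> w ^ M dvd h - g" for h
    using g by (simp add: Gm_iff flip: cong_iff_dvd_diff) (simp add: cong_def)
  have S_eq: "S = (\<Sum>h\<in>Gm w N. c N h * of_bool (w ^ M dvd h - g))"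
    unfolding S_def sum.inter_filter[OF finite_Gm] using class_iff by (intro sum.cong) auto
  have "[T = S] (mod w ^ M)"
    unfolding T_def S_eq using f(2) by (intro cong_sum cong_scalar_left)
  moreover have "[c M g = S] (mod w ^ M)"
    unfolding S_def using compat g by (rule Lambda0_compatible_cong_sum_fibre) (simp add: N_def)
  ultimately show ?thesis
    using T_0 by (metis cong_sym cong_trans)
qed

lemma iota_inj:
  assumes lam: "lam \<in> Lambda0_carrier w" and mu: "mu \<in> Lambda0_carrier w"
    and eq: "iota w lam = iota w mu"
  shows "lam = mu"
proof (intro ext)
  fix M g
  show "lam M g = mu M g"
  proof (cases "g \<in> Gm w M")
    case True
    have "Lambda0_compatible w (\<lambda>m g. lam m g - mu m g)"
      by (intro Lambda0_compatible_diff Lambda0_carrier_compatible lam mu)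
    moreover have "[moment w (\<lambda>m g. lam m g - mu m g) N j = 0] (mod w ^ N)" for N j
      using iota_eq_imp_moment_cong[OF eq, of N j]
      by (simp add: moment_def sum_subtractf left_diff_distrib cong_iff_dvd_diff cong_0_iff)
    ultimately have "[lam M g - mu M g = 0] (mod w ^ M)"
      using True by (rule Lambda0_compatible_coeff_cong_zero)
    hence "lam M g mod w ^ M = mu M g mod w ^ M"
      by (simp add: cong_0_iff flip: cong_iff_dvd_diff) (simp add: cong_def)
    thus ?thesis
      using Lambda0_carrier_mod[OF lam] Lambda0_carrier_mod[OF mu] by simp
  next
    case False
    thus ?thesis
      using Lambda0_carrier_outside[OF lam] Lambda0_carrier_outside[OF mu] by simp
  qed
qed

lemma inj_on_iota: "inj_on (iota w) (carrier (Lambda0 w))"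
  by (rule inj_onI) (simp add: Lambda0_def iota_inj)

lemma Inter_Pk_dense:
  assumes "dense_in_Zp CHAR('k) I"
  shows "(\<Inter>k\<in>I. Pk w k) = {\<zero>\<^bsub>Lambda0 w\<^esub>}"
proof -
  let ?zero = "\<lambda>m g. 0 :: 'k poly"
  have zero: "\<zero>\<^bsub>Lambda0 w\<^esub> = ?zero" and zero_in: "?zero \<in> Lambda0_carrier w"
    by (simp_all add: Lambda0_def Lambda0_carrier_def)
  have fk_zero: "fk w k ?zero = ap_zero" for k
    by (simp add: fk_def ap_zero_def)
  have "(\<lambda>n. 0) \<in> Zp CHAR('k)"
    using mod_power_in_Zp[of "CHAR('k)" 0] prime_CHAR_poly[where 'k = 'k] by (simp add: prime_gt_0_nat)
  then obtain k0 where "k0 \<in> I"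
    using assms unfolding dense_in_Zp_def by blast
  show ?thesis
  proof (intro equalityI subsetI)
    fix lam
    assume "lam \<in> (\<Inter>k\<in>I. Pk w k)"
    hence lam: "lam \<in> Lambda0_carrier w" and "\<And>k. k \<in> I \<Longrightarrow> fk w k lam = fk w k ?zero"
      using \<open>k0 \<in> I\<close> by (auto simp: Pk_def fk_zero)
    with assms have "iota w lam = iota w ?zero"
      by (intro iota_eq_if_fk_eq_on_dense)
    hence "lam = ?zero"
      by (rule iota_inj[OF lam zero_in])
    thus "lam \<in> {\<zero>\<^bsub>Lambda0 w\<^esub>}"
      by (simp add: zero)
  qed (simp add: zero zero_in Pk_def fk_zero)
qed

end

theorem mainTheorem9:
  fixes w :: "'k::{finite,field} poly"
  assumes "lead_coeff w = 1" and "irreducible w"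
  shows "iota w \<in> ring_hom (Lambda0 w) (CZ w)
       \<and> inj_on (iota w) (carrier (Lambda0 w))
       \<and> (\<forall>u\<in>U1 w. iota w (grp w u) = (\<lambda>s. if s \<in> Zp CHAR('k) then upow w u s else ap_zero))
       \<and> (\<forall>a\<in>Ap_carrier w. \<forall>lam\<in>carrier (Lambda0 w).
            iota w (lam_smult w a lam) = cz_smult w a (iota w lam))
       \<and> (\<forall>I. dense_in_Zp CHAR('k) I \<longrightarrow>
            (\<Inter>k\<in>I. Pk w k) = {\<zero>\<^bsub>Lambda0 w\<^esub>})"
proof -
  interpret irreducible_modulus w
    using assms(2) by unfold_locales
  show ?thesis
    using iota_grp Inter_Pk_dense by (simp add: iota_ring_hom inj_on_iota iota_smult)
qed

end
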